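(* Let $f_0:\mathbb{R}^n\times[0,\infty)\to\mathbb{R}$ be twice continuously differentiable in $\mathbf{x}$ and continuously differentiable in $t$, with $\nabla_{\mathbf{x}\mathbf{x}} f_0(\mathbf{x},t)\succeq m\mathbf{I}_n$ for some $m>0$ and all $(\mathbf{x},t)$. Let $\mathbf{x}^\star(t)=\arg\min_{\mathbf{x}\in\mathbb{R}^n} f_0(\mathbf{x},t)$. Let $\mathbf{P}\in\mathbb{S}^n_{++}$ with $\mathbf{P}\succeq\sigma\mathbf{I}_n$ for some $\sigma>0$, and let $\mathbf{x}(t)$, $t\ge 0$, be a solution of $$\dot{\mathbf{x}}(t)=-\nabla_{\mathbf{x}\mathbf{x}} f_0(\mathbf{x}(t),t)^{-1}\big[\mathbf{P}\nabla_{\mathbf{x}} f_0(\mathbf{x}(t),t)+\nabla_{\mathbf{x}t} f_0(\mathbf{x}(t),t)\big],\qquad \mathbf{x}(0)=\mathbf{x}_0,$$ with $\mathbf{x}_0\in\mathbb{R}^n$ arbitrary. Then there is a constant $0\le C(\mathbf{x}_0,m)<\infty$ (e.g. $C=\tfrac{2}{m}\|\nabla_{\mathbf{x}} f_0(\mathbf{x}_0,0)\|_2$) such that for all $t\ge 0$, $$\|\mathbf{x}(t)-\mathbf{x}^\star(t)\|_2\le C(\mathbf{x}_0,m)\,e^{-\sigma t}.$$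
   Context: $\nabla_{\mathbf{x}} f_0$ is the gradient in $\mathbf{x}$, $\nabla_{\mathbf{x}\mathbf{x}} f_0$ the Hessian in $\mathbf{x}$, and $\nabla_{\mathbf{x}t} f_0\in\mathbb{R}^n$ the partial derivative of $\nabla_{\mathbf{x}} f_0$ with respect to $t$. $\mathbb{S}^n_{++}$ denotes the symmetric positive definite $n\times n$ matrices; $\mathbf{A}\succeq\mathbf{B}$ means $\mathbf{A}-\mathbf{B}$ is positive semidefinite. *)

theory Defs
  imports "HOL-Analysis.Analysis"
begin

end

theory Submission
  imports Defs
begin

text \<open>
  Along the trajectory the gradient \<open>g(t) = \<nabla>\<^sub>x f\<^sub>0(x(t), t)\<close> obeys, by the chain rule and the
  definition of the flow, the linear equation \<open>g' = -P g\<close>; since \<open>P \<succeq> \<sigma>I\<close>, the weighted energy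
  \<open>e\<^sup>2\<^sup>\<sigma>\<^sup>t |g(t)|\<^sup>2\<close> is nonincreasing, so \<open>|g(t)| \<le> |g(0)| e\<^sup>-\<^sup>\<sigma>\<^sup>t\<close>. Strong convexity makes
  \<open>\<nabla>\<^sub>x f\<^sub>0(\<cdot>, t)\<close> strongly monotone with constant \<open>m\<close>, and it vanishes at the minimiser, hence
  \<open>|x(t) - x\<^sup>\<star>(t)| \<le> |g(t)| / m\<close>. This gives the bound with \<open>C = |\<nabla>\<^sub>x f\<^sub>0(x\<^sub>0, 0)| / m\<close>.
\<close>

lemma matrix_inv_right:
  fixes A :: "'a::field^'n^'n"
  assumes "invertible A"
  shows "A ** matrix_inv A = mat 1"
  using assms unfolding invertible_def matrix_inv_def by (rule someI2_ex) blast

lemma invertible_if_coercive: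
  fixes A :: "real^'n^'n"
  assumes "m > 0" and coercive: "\<And>v. m * (v \<bullet> v) \<le> v \<bullet> (A *v v)"
  shows "invertible A"
proof -
  have "v = 0" if "A *v v = 0" for v
    using coercive[of v] that \<open>m > 0\<close>
    by (simp add: mult_le_0_iff) (metis inner_eq_zero_iff inner_ge_zero order_antisym)
  then show ?thesis
    unfolding invertible_left_inverse matrix_left_invertible_ker by blast
qed

lemma continuous_on_Blinfun_matrix_vector_mult:
  fixes M :: "'s::topological_space \<Rightarrow> real^'n^'m"
  assumes "continuous_on S M"
  shows "continuous_on S (\<lambda>s. Blinfun (\<lambda>h. M s *v h))"
proof -
  have "continuous_on S (\<lambda>s. blinfun_of_matrix (\<lambda>i j. (M s *v j) \<bullet> i))"
    using assms unfolding inner_vec_def matrix_vector_mult_def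
    by (intro continuous_on_blinfun_of_matrix continuous_intros) auto
  then show ?thesis
    by (simp add: Blinfun_eq_matrix)
qed

lemma has_vector_derivative_compose_partials:
  fixes G :: "real^'n \<Rightarrow> real \<Rightarrow> real^'m" and H :: "real^'n \<Rightarrow> real \<Rightarrow> real^'n^'m"
  assumes G_space: "\<And>y s. s \<in> S \<Longrightarrow> ((\<lambda>z. G z s) has_derivative (\<lambda>h. H y s *v h)) (at y)"
    and H_cont: "continuous_on (UNIV \<times> S) (\<lambda>(y, s). H y s)"
    and G_time: "((\<lambda>s. G (x t) s) has_vector_derivative Gt) (at t within S)"
    and x_deriv: "(x has_vector_derivative v) (at t within S)"
    and "t \<in> S"
  shows "((\<lambda>s. G (x s) s) has_vector_derivative Gt + H (x t) t *v v) (at t within S)"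
proof -
  define B where "B s y = Blinfun (\<lambda>h. H y s *v h)" for s y
  have B_apply: "blinfun_apply (B s y) = (\<lambda>h. H y s *v h)" for s y
    unfolding B_def by (simp add: bounded_linear_Blinfun_apply)
  have "continuous_on (S \<times> UNIV) ((\<lambda>(y, s). H y s) \<circ> prod.swap)"
    by (rule continuous_on_compose[OF continuous_on_swap]) (simp add: H_cont product_swap)
  then have "continuous_on (S \<times> UNIV) (\<lambda>p. H (snd p) (fst p))"
    by (simp add: o_def case_prod_beta)
  then have "continuous_on (S \<times> UNIV) (\<lambda>(s, y). B s y)"
    unfolding B_def split_beta by (rule continuous_on_Blinfun_matrix_vector_mult)
  then have "((\<lambda>(s, y). G y s) has_derivative (\<lambda>(ds, dy). ds *\<^sub>R Gt + B t (x t) dy))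
      (at (t, x t) within S \<times> UNIV)"
    using G_time G_space \<open>t \<in> S\<close>
    by (intro has_derivative_partialsI)
       (auto simp: B_apply has_vector_derivative_def continuous_on_eq_continuous_within)
  moreover have "((\<lambda>s. (s, x s)) has_derivative (\<lambda>h. (h, h *\<^sub>R v))) (at t within S)"
    using x_deriv unfolding has_vector_derivative_def
    by (intro has_derivative_Pair has_derivative_ident)
  ultimately have "((\<lambda>s. G (x s) s) has_derivative (\<lambda>h. h *\<^sub>R Gt + B t (x t) (h *\<^sub>R v))) (at t within S)"
    by (auto dest: has_derivative_in_compose[OF _ has_derivative_subset])
  then show ?thesis
    by (simp add: has_vector_derivative_def B_apply scaleR_right_distrib matrix_vector_mult_scaleR)
qed

lemma norm_le_exp_decay:
  fixes g :: "real \<Rightarrow> 'a::real_inner"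
  assumes deriv: "\<And>s. s \<ge> 0 \<Longrightarrow> (g has_vector_derivative g' s) (at s within {0..})"
    and dissipative: "\<And>s. s \<ge> 0 \<Longrightarrow> g s \<bullet> g' s \<le> - \<sigma> * (g s \<bullet> g s)"
    and "t \<ge> 0"
  shows "norm (g t) \<le> norm (g 0) * exp (- \<sigma> * t)"
proof -
  define k where "k s = exp (2 * \<sigma> * s) * (g s \<bullet> g s)" for s
  define k' where "k' s = exp (2 * \<sigma> * s) * (2 * \<sigma> * (g s \<bullet> g s) + 2 * (g s \<bullet> g' s))" for s
  have "(k has_derivative (*) (k' s)) (at s within {0..t})" if "s \<ge> 0" for s
  proof -
    have g_deriv: "(g has_derivative (\<lambda>h. h *\<^sub>R g' s)) (at s within {0..})"
      using deriv[OF that] by (simp add: has_vector_derivative_def)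
    have "((\<lambda>s. g s \<bullet> g s) has_real_derivative 2 * (g s \<bullet> g' s)) (at s within {0..})"
      unfolding has_field_derivative_def
      by (rule has_derivative_eq_rhs[OF has_derivative_inner[OF g_deriv g_deriv]])
         (simp add: fun_eq_iff inner_commute)
    then have "(k has_real_derivative k' s) (at s within {0..})"
      unfolding k_def k'_def
      by (auto intro!: derivative_eq_intros simp: algebra_simps)
    then show ?thesis
      unfolding has_field_derivative_def by (rule has_derivative_subset) auto
  qed
  then obtain z where "k t - k 0 = k' z * t" "z \<ge> 0"
    using mvt_very_simple[OF \<open>t \<ge> 0\<close>, of k "\<lambda>s. (*) (k' s)"] by force
  moreover have "k' z \<le> 0"
    using dissipative[OF \<open>z \<ge> 0\<close>] by (simp add: k'_def mult_nonneg_nonpos)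
  ultimately have "exp (2 * \<sigma> * t) * (norm (g t))\<^sup>2 \<le> (norm (g 0))\<^sup>2"
    using \<open>t \<ge> 0\<close> mult_nonpos_nonneg[of "k' z" t] by (simp add: k_def power2_norm_eq_inner)
  then have "(norm (g t))\<^sup>2 \<le> (norm (g 0) * exp (- \<sigma> * t))\<^sup>2"
    by (simp add: exp_minus field_simps flip: exp_double)
  then show ?thesis
    by (rule power2_le_imp_le) simp
qed

lemma gradient_eq_0_at_minimum:
  fixes f :: "'a::real_inner \<Rightarrow> real"
  assumes "(f has_derivative (\<lambda>h. g \<bullet> h)) (at a)" and "\<And>y. f a \<le> f y"
  shows "g = 0"
proof -
  have "(\<lambda>h. g \<bullet> h) = (\<lambda>h. 0)"
    using assms by (intro differential_zero_maxmin[of a UNIV]) auto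
  then show ?thesis
    by (metis inner_eq_zero_iff)
qed

lemma strongly_monotone_if_coercive_derivative:
  fixes G :: "'a::real_inner \<Rightarrow> 'a"
  assumes deriv: "\<And>y. (G has_derivative G' y) (at y)"
    and coercive: "\<And>y v. m * (v \<bullet> v) \<le> v \<bullet> G' y v"
  shows "m * ((a - b) \<bullet> (a - b)) \<le> (a - b) \<bullet> (G a - G b)"
proof -
  define d where "d = a - b"
  define \<phi> where "\<phi> s = d \<bullet> G (b + s *\<^sub>R d)" for s
  have "(\<phi> has_derivative (\<lambda>h. d \<bullet> G' (b + s *\<^sub>R d) (h *\<^sub>R d))) (at s within S)" for s S
    unfolding \<phi>_def
    by (intro has_derivative_inner_right has_derivative_compose[OF _ deriv] derivative_eq_intros) auto
  then obtain z where "\<phi> 1 - \<phi> 0 = d \<bullet> G' (b + z *\<^sub>R d) d"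
    using mvt_very_simple[of 0 1 \<phi>] by force
  then show ?thesis
    using coercive[where y="b + z *\<^sub>R d" and v=d] by (simp add: \<phi>_def d_def flip: inner_diff_right)
qed

lemma norm_diff_le_if_strongly_monotone:
  fixes G :: "'a::real_inner \<Rightarrow> 'a"
  assumes "m > 0" and "m * ((a - b) \<bullet> (a - b)) \<le> (a - b) \<bullet> (G a - G b)" and "G b = 0"
  shows "norm (a - b) \<le> norm (G a) / m"
proof -
  have "m * (norm (a - b) * norm (a - b)) \<le> norm (a - b) * norm (G a)"
    using assms(2,3) norm_cauchy_schwarz[of "a - b" "G a"]
    by (simp add: power2_norm_eq_inner[symmetric] power2_eq_square)
  then have "m * norm (a - b) \<le> norm (G a)"
    by (cases "a = b") (auto simp: mult.left_commute)
  then show ?thesis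
    using \<open>m > 0\<close> by (simp add: field_simps)
qed

theorem lemma1:
  fixes f0 :: "real^'n \<Rightarrow> real \<Rightarrow> real"
    and grad :: "real^'n \<Rightarrow> real \<Rightarrow> real^'n"
    and hess :: "real^'n \<Rightarrow> real \<Rightarrow> real^'n^'n"
    and gradt :: "real^'n \<Rightarrow> real \<Rightarrow> real^'n"
    and ft :: "real^'n \<Rightarrow> real \<Rightarrow> real"
    and xstar :: "real \<Rightarrow> real^'n"
    and x :: "real \<Rightarrow> real^'n"
    and P :: "real^'n^'n"
    and m \<sigma> :: real and x0 :: "real^'n"
  assumes grad_deriv: "\<And>y t. t \<ge> 0 \<Longrightarrow>
        ((\<lambda>z. f0 z t) has_derivative (\<lambda>h. grad y t \<bullet> h)) (at y)"
    and hess_deriv: "\<And>y t. t \<ge> 0 \<Longrightarrow>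
        ((\<lambda>z. grad z t) has_derivative (\<lambda>h. hess y t *v h)) (at y)"
    and hess_cont: "continuous_on (UNIV \<times> {0..}) (\<lambda>(y, t). hess y t)"
    and f0_t_deriv: "\<And>y t. t \<ge> 0 \<Longrightarrow>
        ((\<lambda>s. f0 y s) has_real_derivative ft y t) (at t within {0..})"
    and ft_cont: "continuous_on (UNIV \<times> {0..}) (\<lambda>(y, t). ft y t)"
    and gradt_deriv: "\<And>y t. t \<ge> 0 \<Longrightarrow>
        ((\<lambda>s. grad y s) has_vector_derivative gradt y t) (at t within {0..})"
    and gradt_cont: "continuous_on (UNIV \<times> {0..}) (\<lambda>(y, t). gradt y t)"
    and m_pos: "m > 0"
    and strong_convex: "\<And>y t v. t \<ge> 0 \<Longrightarrow> v \<bullet> (hess y t *v v) \<ge> m * (v \<bullet> v)"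
    and xstar_min: "\<And>t y. t \<ge> 0 \<Longrightarrow> f0 (xstar t) t \<le> f0 y t"
    and P_sym: "transpose P = P"
    and sigma_pos: "\<sigma> > 0"
    and P_ge: "\<And>v. v \<bullet> (P *v v) \<ge> \<sigma> * (v \<bullet> v)"
    and x_ode: "\<And>t. t \<ge> 0 \<Longrightarrow>
        (x has_vector_derivative
           - (matrix_inv (hess (x t) t) *v (P *v grad (x t) t + gradt (x t) t))) (at t within {0..})"
    and x_init: "x 0 = x0"
  shows "\<exists>C. 0 \<le> C \<and> (\<forall>t\<ge>0. norm (x t - xstar t) \<le> C * exp (- \<sigma> * t))"
proof -
  define g where "g t = grad (x t) t" for t
  have g_deriv: "(g has_vector_derivative - (P *v g t)) (at t within {0..})" if "t \<ge> 0" for t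
  proof -
    have "(g has_vector_derivative gradt (x t) t + hess (x t) t *v
        - (matrix_inv (hess (x t) t) *v (P *v g t + gradt (x t) t))) (at t within {0..})"
      unfolding g_def using that
      by (intro has_vector_derivative_compose_partials[OF hess_deriv hess_cont gradt_deriv x_ode]) auto
    moreover have "invertible (hess (x t) t)"
      using invertible_if_coercive[OF m_pos strong_convex[OF that]] .
    ultimately show ?thesis
      by (simp add: matrix_vector_mul_assoc matrix_inv_right linear_neg[OF matrix_vector_mul_linear])
  qed
  have g_decay: "norm (g t) \<le> norm (g 0) * exp (- \<sigma> * t)" if "t \<ge> 0" for t
  proof (rule norm_le_exp_decay[OF g_deriv _ that])
    show "g s \<bullet> - (P *v g s) \<le> - \<sigma> * (g s \<bullet> g s)" for s
      using P_ge[of "g s"] by simp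
  qed
  have dist_le: "norm (x t - xstar t) \<le> norm (g t) / m" if "t \<ge> 0" for t
    using m_pos strongly_monotone_if_coercive_derivative[OF hess_deriv strong_convex, OF that that]
      gradient_eq_0_at_minimum[OF grad_deriv xstar_min, OF that that]
    unfolding g_def by (rule norm_diff_le_if_strongly_monotone)
  show ?thesis
  proof (intro exI[of _ "norm (grad x0 0) / m"] allI impI conjI)
    fix t :: real
    assume "t \<ge> 0"
    then show "norm (x t - xstar t) \<le> norm (grad x0 0) / m * exp (- \<sigma> * t)"
      using dist_le g_decay m_pos by (fastforce simp: g_def x_init intro: order_trans divide_right_mono)
  qed (use m_pos in simp)
qed

end
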